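(* A matrix is a slack matrix of a polyhedral cone if and only if it is a slack matrix of some pointed polyhedral cone.
   Context: A matrix $S\in\mathbb{R}^{p\times q}$ is a slack matrix of a polyhedral cone $K\subseteq\mathbb{R}^n$ if there are $A\in\mathbb{R}^{p\times n}$, $B\in\mathbb{R}^{n\times q}$ with $K=\{x\in\mathbb{R}^n: x^TB\ge 0\}=\{y^TA: y\in\mathbb{R}_+^p\}$ and $S=AB$. A cone is pointed if its lineality space (the largest linear subspace it contains) is $\{0\}$. *)

theory Defs
  imports Complex_Main
begin

text \<open>Vectors of R^n are functions nat => real vanishing outside {..<n};
  matrices are functions nat => nat => real, only entries inside the stated
  bounds are relevant.\<close>

definition rvec :: "nat \<Rightarrow> (nat \<Rightarrow> real) set" where
  "rvec n = {x. \<forall>i\<ge>n. x i = 0}"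

definition cone_of_ineqs :: "nat \<Rightarrow> nat \<Rightarrow> (nat \<Rightarrow> nat \<Rightarrow> real) \<Rightarrow> (nat \<Rightarrow> real) set" where
  "cone_of_ineqs n q B = {x \<in> rvec n. \<forall>j<q. (\<Sum>i<n. x i * B i j) \<ge> 0}"

definition cone_of_gens :: "nat \<Rightarrow> nat \<Rightarrow> (nat \<Rightarrow> nat \<Rightarrow> real) \<Rightarrow> (nat \<Rightarrow> real) set" where
  "cone_of_gens p n A = {(\<lambda>j. if j < n then (\<Sum>i<p. y i * A i j) else 0) | y. \<forall>i<p. y i \<ge> 0}"

definition is_slack_matrix_of :: "nat \<Rightarrow> nat \<Rightarrow> nat \<Rightarrow> (nat \<Rightarrow> nat \<Rightarrow> real) \<Rightarrow> (nat \<Rightarrow> real) set \<Rightarrow> bool" where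
  "is_slack_matrix_of p q n S K \<longleftrightarrow>
     (\<exists>A B. K = cone_of_ineqs n q B \<and> K = cone_of_gens p n A \<and>
            (\<forall>i<p. \<forall>j<q. S i j = (\<Sum>k<n. A i k * B k j)))"

definition lin_subspace :: "(nat \<Rightarrow> real) set \<Rightarrow> bool" where
  "lin_subspace L \<longleftrightarrow> (\<lambda>i. 0) \<in> L \<and> (\<forall>x\<in>L. \<forall>y\<in>L. (\<lambda>i. x i + y i) \<in> L)
     \<and> (\<forall>c. \<forall>x\<in>L. (\<lambda>i. c * x i) \<in> L)"

definition pointed :: "(nat \<Rightarrow> real) set \<Rightarrow> bool" where
  "pointed K \<longleftrightarrow> (\<forall>L. lin_subspace L \<and> L \<subseteq> K \<longrightarrow> L = {\<lambda>i. 0})"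

end

theory Submission
  imports Defs "HOL-Combinatorics.Permutations"
begin

text \<open>If K = {x : x^T B \<ge> 0} = cone(A) is not pointed, its lineality space contains some
  v \<noteq> 0, and then v^T B = 0. Permuting coordinates so that v has a nonzero last entry and
  projecting along v onto the remaining coordinates maps both descriptions of K onto a cone
  in one dimension less; the rows of A are projected in the same way, and since v^T B = 0 the
  products A B are unchanged. A slack matrix of a cone of minimal dimension therefore
  belongs to a pointed cone.\<close>

definition slack_factorization ::
  "nat \<Rightarrow> nat \<Rightarrow> nat \<Rightarrow> (nat \<Rightarrow> nat \<Rightarrow> real) \<Rightarrow> (nat \<Rightarrow> nat \<Rightarrow> real) \<Rightarrow> (nat \<Rightarrow> nat \<Rightarrow> real) \<Rightarrow> bool"
  where "slack_factorization p q n S A B \<longleftrightarrow>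
    cone_of_ineqs n q B = cone_of_gens p n A \<and> (\<forall>i<p. \<forall>j<q. S i j = (\<Sum>k<n. A i k * B k j))"

lemma is_slack_matrix_of_iff:
  "is_slack_matrix_of p q n S K \<longleftrightarrow> (\<exists>A B. K = cone_of_ineqs n q B \<and> slack_factorization p q n S A B)"
  by (auto simp: is_slack_matrix_of_def slack_factorization_def)

lemma comp_permute_mem_cone_of_ineqs_iff:
  assumes \<sigma>: "\<sigma> permutes {..<n}"
  shows "x \<circ> \<sigma> \<in> cone_of_ineqs n q (B \<circ> \<sigma>) \<longleftrightarrow> x \<in> cone_of_ineqs n q B"
proof -
  have "\<sigma> i = i" if "n \<le> i" for i
    using permutes_not_in[OF \<sigma>] that by simp
  then have "x \<circ> \<sigma> \<in> rvec n \<longleftrightarrow> x \<in> rvec n"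
    by (simp add: rvec_def)
  moreover have "(\<Sum>i<n. (x \<circ> \<sigma>) i * (B \<circ> \<sigma>) i j) = (\<Sum>i<n. x i * B i j)" for j
    using sum.permute[OF \<sigma>, of "\<lambda>i. x i * B i j"] by (simp add: comp_def)
  ultimately show ?thesis
    by (simp add: cone_of_ineqs_def)
qed

lemma cone_of_ineqs_permute:
  assumes \<sigma>: "\<sigma> permutes {..<n}"
  shows "(\<lambda>x. x \<circ> \<sigma>) ` cone_of_ineqs n q B = cone_of_ineqs n q (B \<circ> \<sigma>)"
proof (intro equalityI subsetI)
  fix z assume "z \<in> cone_of_ineqs n q (B \<circ> \<sigma>)"
  moreover have "z = (z \<circ> inv \<sigma>) \<circ> \<sigma>"
    by (simp add: fun_eq_iff permutes_inverses[OF \<sigma>])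
  ultimately show "z \<in> (\<lambda>x. x \<circ> \<sigma>) ` cone_of_ineqs n q B"
    using comp_permute_mem_cone_of_ineqs_iff[OF \<sigma>] by (metis image_eqI)
qed (use comp_permute_mem_cone_of_ineqs_iff[OF \<sigma>] in auto)

lemma cone_of_gens_permute:
  assumes \<sigma>: "\<sigma> permutes {..<n}"
  shows "(\<lambda>x. x \<circ> \<sigma>) ` cone_of_gens p n A = cone_of_gens p n (\<lambda>i. A i \<circ> \<sigma>)"
proof -
  have "(\<lambda>j. if j < n then \<Sum>i<p. y i * A i j else 0) \<circ> \<sigma>
      = (\<lambda>j. if j < n then \<Sum>i<p. y i * (A i \<circ> \<sigma>) j else 0)" for y
    using permutes_in_image[OF \<sigma>] by (auto simp: fun_eq_iff)
  then show ?thesis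
    unfolding cone_of_gens_def setcompr_eq_image image_image by simp
qed

lemma slack_factorization_permute:
  assumes "slack_factorization p q n S A B" and \<sigma>: "\<sigma> permutes {..<n}"
  shows "slack_factorization p q n S (\<lambda>i. A i \<circ> \<sigma>) (B \<circ> \<sigma>)"
proof -
  have "(\<Sum>k<n. (A i \<circ> \<sigma>) k * (B \<circ> \<sigma>) k j) = (\<Sum>k<n. A i k * B k j)" for i j
    using sum.permute[OF \<sigma>, of "\<lambda>k. A i k * B k j"] by (simp add: comp_def)
  moreover have "cone_of_ineqs n q (B \<circ> \<sigma>) = cone_of_gens p n (\<lambda>i. A i \<circ> \<sigma>)"
    using assms(1) cone_of_ineqs_permute[OF \<sigma>, of q B] cone_of_gens_permute[OF \<sigma>, of p A]
    by (simp add: slack_factorization_def)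
  ultimately show ?thesis
    using assms(1) by (simp add: slack_factorization_def)
qed

definition project_along :: "nat \<Rightarrow> (nat \<Rightarrow> real) \<Rightarrow> (nat \<Rightarrow> real) \<Rightarrow> (nat \<Rightarrow> real)" where
  "project_along m v x = (\<lambda>i. if i < m then x i - x m / v m * v i else 0)"

lemma sum_project_along:
  fixes B :: "nat \<Rightarrow> nat \<Rightarrow> real"
  assumes "v m \<noteq> 0" and "(\<Sum>i<Suc m. v i * B i j) = 0"
  shows "(\<Sum>i<m. project_along m v x i * B i j) = (\<Sum>i<Suc m. x i * B i j)"
proof -
  have "(\<Sum>i<m. project_along m v x i * B i j) = (\<Sum>i<Suc m. (x i - x m / v m * v i) * B i j)"
    using assms(1) by (simp add: project_along_def)
  also have "\<dots> = (\<Sum>i<Suc m. x i * B i j) - x m / v m * (\<Sum>i<Suc m. v i * B i j)"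
    by (simp add: algebra_simps sum_subtractf sum_distrib_left)
  finally show ?thesis
    using assms(2) by simp
qed

lemma project_along_cone_of_ineqs:
  assumes "v m \<noteq> 0" and "\<forall>j<q. (\<Sum>i<Suc m. v i * B i j) = 0"
  shows "project_along m v ` cone_of_ineqs (Suc m) q B = cone_of_ineqs m q B"
proof (intro equalityI subsetI)
  fix z assume "z \<in> project_along m v ` cone_of_ineqs (Suc m) q B"
  then show "z \<in> cone_of_ineqs m q B"
    using assms sum_project_along[of v m, OF assms(1)]
    by (auto simp: cone_of_ineqs_def rvec_def project_along_def)
next
  fix x assume x: "x \<in> cone_of_ineqs m q B"
  then have "x \<in> rvec m"
    by (simp add: cone_of_ineqs_def)
  then have "x \<in> cone_of_ineqs (Suc m) q B" and "project_along m v x = x"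
    using x by (auto simp: cone_of_ineqs_def rvec_def project_along_def)
  then show "x \<in> project_along m v ` cone_of_ineqs (Suc m) q B"
    by (metis image_eqI)
qed

lemma project_along_cone_of_gens:
  "project_along m v ` cone_of_gens p (Suc m) A
     = cone_of_gens p m (\<lambda>i. project_along m v (A i))"
proof -
  have "project_along m v (\<lambda>j. if j < Suc m then \<Sum>i<p. y i * A i j else 0)
      = (\<lambda>j. if j < m then \<Sum>i<p. y i * project_along m v (A i) j else 0)" for y
    by (simp add: fun_eq_iff project_along_def algebra_simps sum_subtractf
        sum_distrib_left sum_divide_distrib)
  then show ?thesis
    unfolding cone_of_gens_def setcompr_eq_image image_image by simp
qed

lemma slack_factorization_project_along:
  assumes "slack_factorization p q (Suc m) S A B"
    and "v m \<noteq> 0" and "\<forall>j<q. (\<Sum>i<Suc m. v i * B i j) = 0"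
  shows "slack_factorization p q m S (\<lambda>i. project_along m v (A i)) B"
  using assms project_along_cone_of_ineqs[OF assms(2,3)] project_along_cone_of_gens
    sum_project_along[of v m, OF assms(2)]
  by (auto simp: slack_factorization_def)

lemma slack_factorization_reduce:
  assumes fac: "slack_factorization p q n S A B"
    and v: "v \<in> rvec n" "v \<noteq> (\<lambda>i. 0)" and vB: "\<forall>j<q. (\<Sum>i<n. v i * B i j) = 0"
  shows "\<exists>m A' B'. n = Suc m \<and> slack_factorization p q m S A' B'"
proof -
  obtain k where k: "v k \<noteq> 0"
    using v(2) by auto
  with v(1) have "k < n"
    by (auto simp: rvec_def not_less[symmetric])
  then obtain m where n: "n = Suc m"
    using less_imp_Suc_add by blast
  define \<sigma> where "\<sigma> = Transposition.transpose k m"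
  have \<sigma>: "\<sigma> permutes {..<n}"
    using \<open>k < n\<close> n by (simp add: \<sigma>_def permutes_swap_id)
  have "(\<Sum>i<n. (v \<circ> \<sigma>) i * (B \<circ> \<sigma>) i j) = (\<Sum>i<n. v i * B i j)" for j
    using sum.permute[OF \<sigma>, of "\<lambda>i. v i * B i j"] by (simp add: comp_def)
  moreover have "(v \<circ> \<sigma>) m \<noteq> 0"
    using k by (simp add: \<sigma>_def)
  ultimately have "slack_factorization p q m S (\<lambda>i. project_along m (v \<circ> \<sigma>) (A i \<circ> \<sigma>)) (B \<circ> \<sigma>)"
    using slack_factorization_project_along slack_factorization_permute[OF fac \<sigma>] vB n
    by simp
  with n show ?thesis
    by blast
qed

lemma kernel_vector_if_not_pointed:
  assumes "\<not> pointed (cone_of_ineqs n q B)"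
  shows "\<exists>v\<in>rvec n. v \<noteq> (\<lambda>i. 0) \<and> (\<forall>j<q. (\<Sum>i<n. v i * B i j) = 0)"
proof -
  obtain L where L: "lin_subspace L" "L \<subseteq> cone_of_ineqs n q B" "L \<noteq> {\<lambda>i. 0}"
    using assms by (auto simp: pointed_def)
  then obtain v where "v \<in> L" "v \<noteq> (\<lambda>i. 0)"
    by (auto simp: lin_subspace_def)
  moreover have "(\<lambda>i. -1 * v i) \<in> L"
    using L(1) \<open>v \<in> L\<close> unfolding lin_subspace_def by blast
  ultimately have "v \<in> cone_of_ineqs n q B" "(\<lambda>i. -1 * v i) \<in> cone_of_ineqs n q B"
    using L(2) by auto
  then have "v \<in> rvec n" "\<forall>j<q. (\<Sum>i<n. v i * B i j) \<ge> 0 \<and> - (\<Sum>i<n. v i * B i j) \<ge> 0"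
    by (auto simp: cone_of_ineqs_def sum_negf)
  with \<open>v \<noteq> (\<lambda>i. 0)\<close> show ?thesis
    by force
qed

lemma is_slack_matrix_of_not_pointed_reduce:
  assumes "is_slack_matrix_of p q n S K" and "\<not> pointed K"
  shows "\<exists>m<n. \<exists>K'. is_slack_matrix_of p q m S K'"
proof -
  obtain A B where K: "K = cone_of_ineqs n q B" and fac: "slack_factorization p q n S A B"
    using assms(1) by (auto simp: is_slack_matrix_of_iff)
  obtain v where "v \<in> rvec n" "v \<noteq> (\<lambda>i. 0)" "\<forall>j<q. (\<Sum>i<n. v i * B i j) = 0"
    using kernel_vector_if_not_pointed assms(2) K by blast
  then show ?thesis
    using slack_factorization_reduce[OF fac] by (fastforce simp: is_slack_matrix_of_iff)
qed

theorem lemma2p10: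
  fixes p q :: nat and S :: "nat \<Rightarrow> nat \<Rightarrow> real"
  shows "(\<exists>n K. is_slack_matrix_of p q n S K) \<longleftrightarrow>
         (\<exists>n K. is_slack_matrix_of p q n S K \<and> pointed K)"
proof
  assume "\<exists>n K. is_slack_matrix_of p q n S K"
  then obtain n K where K: "is_slack_matrix_of p q n S K"
    and minimal: "\<forall>m<n. \<not> (\<exists>K'. is_slack_matrix_of p q m S K')"
    using exists_least_iff[of "\<lambda>n. \<exists>K. is_slack_matrix_of p q n S K"] by blast
  have "pointed K"
    using is_slack_matrix_of_not_pointed_reduce K minimal by blast
  with K show "\<exists>n K. is_slack_matrix_of p q n S K \<and> pointed K"
    by blast
qed blast

end
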